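(* Let $n\ge 2$ and let $\mathcal{A}=\langle Q,\Sigma,\delta\rangle$ be an $n$-state DFA whose transition monoid is $T_n$, with $x\in\Sigma$ a fixed letter of rank $n-1$. Then the digraph $\Gamma_{2n-3}$ is strongly connected.
   Context: Words act on states letter by letter from left to right. The transition monoid is the monoid of transformations of $Q$ generated by the letters; $T_n$ is the monoid of all self-maps of an $n$-element set. A letter has rank $n-1$ if $|Q\cdot x|=n-1$. For such $x$, $\mathrm{excl}(x)$ is the unique state in $Q\setminus Q\cdot x$, and $\mathrm{dupl}(x)$ is the unique state $p$ with $p=q_1\cdot x=q_2\cdot x$ for some $q_1\ne q_2$. Let $\Pi\subseteq\Sigma$ be the set of letters acting as permutations of $Q$, and $\Pi^i$ the set of words of length at most $i$ over $\Pi$ (including the empty word). $\Gamma_i$ is the digraph with vertex set $Q$ and edge set $E_i=\{(\mathrm{excl}(x)\cdot w,\ \mathrm{dupl}(x)\cdot w)\mid w\in\Pi^i\}$. A digraph is strongly connected if for every ordered pair of vertices there is a directed path from the first to the second. *)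

theory Defs
  imports Main "HOL-Library.FuncSet"
begin

definition is_dfa :: "'q set \<Rightarrow> 'a set \<Rightarrow> ('q \<Rightarrow> 'a \<Rightarrow> 'q) \<Rightarrow> bool" where
  "is_dfa Q Sig delta \<longleftrightarrow> finite Q \<and> Q \<noteq> {} \<and> finite Sig \<and>
     (\<forall>q\<in>Q. \<forall>a\<in>Sig. delta q a \<in> Q)"

definition word_act :: "('q \<Rightarrow> 'a \<Rightarrow> 'q) \<Rightarrow> 'q \<Rightarrow> 'a list \<Rightarrow> 'q" where
  "word_act delta q w = foldl delta q w"

definition transition_monoid :: "'q set \<Rightarrow> 'a set \<Rightarrow> ('q \<Rightarrow> 'a \<Rightarrow> 'q) \<Rightarrow> ('q \<Rightarrow> 'q) set" where
  "transition_monoid Q Sig delta =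
     {restrict (\<lambda>q. word_act delta q w) Q | w. set w \<subseteq> Sig}"

definition full_transf :: "'q set \<Rightarrow> ('q \<Rightarrow> 'q) set" where
  "full_transf Q = Q \<rightarrow>\<^sub>E Q"

definition letter_rank :: "'q set \<Rightarrow> ('q \<Rightarrow> 'a \<Rightarrow> 'q) \<Rightarrow> 'a \<Rightarrow> nat" where
  "letter_rank Q delta x = card ((\<lambda>q. delta q x) ` Q)"

definition excl :: "'q set \<Rightarrow> ('q \<Rightarrow> 'a \<Rightarrow> 'q) \<Rightarrow> 'a \<Rightarrow> 'q" where
  "excl Q delta x = (THE p. p \<in> Q - (\<lambda>q. delta q x) ` Q)"

definition dupl :: "'q set \<Rightarrow> ('q \<Rightarrow> 'a \<Rightarrow> 'q) \<Rightarrow> 'a \<Rightarrow> 'q" where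
  "dupl Q delta x = (THE p. \<exists>q1\<in>Q. \<exists>q2\<in>Q. q1 \<noteq> q2 \<and> p = delta q1 x \<and> p = delta q2 x)"

definition perm_letters :: "'q set \<Rightarrow> 'a set \<Rightarrow> ('q \<Rightarrow> 'a \<Rightarrow> 'q) \<Rightarrow> 'a set" where
  "perm_letters Q Sig delta = {a \<in> Sig. bij_betw (\<lambda>q. delta q a) Q Q}"

definition short_words :: "'a set \<Rightarrow> nat \<Rightarrow> 'a list set" where
  "short_words P i = {w. set w \<subseteq> P \<and> length w \<le> i}"

definition Gamma_edges :: "'q set \<Rightarrow> 'a set \<Rightarrow> ('q \<Rightarrow> 'a \<Rightarrow> 'q) \<Rightarrow> 'a \<Rightarrow> nat \<Rightarrow> ('q \<times> 'q) set" where
  "Gamma_edges Q Sig delta x i =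
     {(word_act delta (excl Q delta x) w, word_act delta (dupl Q delta x) w) | w.
        w \<in> short_words (perm_letters Q Sig delta) i}"

definition strongly_connected :: "'q set \<Rightarrow> ('q \<times> 'q) set \<Rightarrow> bool" where
  "strongly_connected V E \<longleftrightarrow> (\<forall>p\<in>V. \<forall>q\<in>V. (p, q) \<in> (E \<inter> (V \<times> V))\<^sup>*)"

end

theory Submission
  imports Defs "HOL-Combinatorics.Transposition"
begin

text \<open>A word acting injectively on \<open>Q\<close> uses only permutation letters, and every transposition
  of \<open>Q\<close> lies in the transition monoid; so the words over \<open>\<Pi>\<close> act 2-transitively on \<open>Q\<close>.
  Consequently a set of states, or a relation on states, that is closed under the letters of \<open>\<Pi>\<close>
  and contains a state, respectively a pair of distinct states, contains everything.

  Every edge of \<open>\<Gamma>\<^sub>i\<close>, moved by any letter of \<open>\<Pi>\<close>, is an edge of the next graph. Hence the set of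
  sources of \<open>\<Gamma>\<^sub>i\<close> grows at every step until it is all of \<open>Q\<close>, which happens by \<open>i = n - 1\<close>;
  then every state has an out-edge, so the graph contains a cycle. From then on the
  equivalence "mutually reachable" loses at least one class per step as long as it is not
  closed under \<open>\<Pi>\<close>, i.e. as long as \<open>\<Gamma>\<^sub>i\<close> is not strongly connected; starting from at most
  \<open>n - 1\<close> classes, a single class is left at \<open>i = 2n - 3\<close>.\<close>

lemma countdown_to_zero:
  fixes f :: "nat \<Rightarrow> nat"
  assumes decreasing: "\<And>i. i0 \<le> i \<Longrightarrow> f (Suc i) \<le> f i"
    and stable_zero: "\<And>i. i0 \<le> i \<Longrightarrow> f (Suc i) = f i \<Longrightarrow> f i = 0"
  shows "f (i0 + k) \<le> f i0 - k"
proof (induction k)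
  case (Suc k)
  have "f (Suc (i0 + k)) < f (i0 + k) \<or> f (i0 + k) = 0"
    using decreasing[of "i0 + k"] stable_zero[of "i0 + k"] by fastforce
  moreover have "f (Suc (i0 + k)) = 0" if "f (i0 + k) = 0"
    using decreasing[of "i0 + k"] that by simp
  ultimately show ?case using Suc.IH by auto
qed simp

lemma card_quotient_less_card:
  assumes "finite A" "equiv A r" "(u, v) \<in> r" "u \<noteq> v"
  shows "card (A // r) < card A"
proof -
  have "v \<in> A" "r `` {u} = r `` {v}"
    using assms(2,3) by (auto simp: equiv_class_eq_iff)
  have "A // r = (\<lambda>x. r `` {x}) ` (A - {v})"
  proof
    show "A // r \<subseteq> (\<lambda>x. r `` {x}) ` (A - {v})"
    proof
      fix X assume "X \<in> A // r"
      then obtain y where "y \<in> A" "X = r `` {y}"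
        by (rule quotientE)
      then show "X \<in> (\<lambda>x. r `` {x}) ` (A - {v})"
        using \<open>r `` {u} = r `` {v}\<close> assms(2,3,4)
        by (cases "y = v") (auto simp: equiv_class_eq_iff)
    qed
  qed (auto simp: quotient_def)
  then have "card (A // r) \<le> card (A - {v})"
    by (simp add: card_image_le assms(1))
  also have "\<dots> < card A"
    using \<open>v \<in> A\<close> assms(1) by (rule card_Diff1_less[rotated])
  finally show ?thesis .
qed

lemma card_quotient_strict_refinement:
  assumes "finite A" "equiv A R" "equiv A S" "R \<subset> S"
  shows "card (A // S) < card (A // R)"
proof -
  obtain u v where uv: "(u, v) \<in> S" "(u, v) \<notin> R"
    using assms(4) by auto
  have "u \<in> A" "v \<in> A"
    using uv(1) equiv_type[OF assms(3)] by auto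
  have merge: "(\<lambda>X. S `` X) ` (A // R) = A // S"
    using assms(4) by (intro refines_equiv_image_eq[OF _ assms(2,3)]) auto
  have "\<not> inj_on (\<lambda>X. S `` X) (A // R)"
  proof
    assume inj: "inj_on (\<lambda>X. S `` X) (A // R)"
    have "S `` (R `` {w}) = S `` {w}" for w
      using assms(4) by (intro refines_equiv_class_eq2[OF _ assms(2,3)]) auto
    then have "S `` (R `` {u}) = S `` (R `` {v})"
      using equiv_class_eq[OF assms(3) uv(1)] by simp
    then have "R `` {u} = R `` {v}"
      using inj_onD[OF inj _ quotientI quotientI] \<open>u \<in> A\<close> \<open>v \<in> A\<close> by blast
    then show False
      using eq_equiv_class[OF _ assms(2) \<open>v \<in> A\<close>] uv(2) by blast
  qed
  moreover have "finite (A // R)"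
    using finite_quotient[OF assms(1) equiv_type[OF assms(2)]] .
  ultimately have "card ((\<lambda>X. S `` X) ` (A // R)) \<noteq> card (A // R)"
    using inj_on_iff_eq_card by blast
  moreover have "card ((\<lambda>X. S `` X) ` (A // R)) \<le> card (A // R)"
    by (rule card_image_le) fact
  ultimately show ?thesis
    unfolding merge by linarith
qed

lemma card_quotient_le_one_iff:
  assumes "finite A" "equiv A r"
  shows "card (A // r) \<le> 1 \<longleftrightarrow> r = A \<times> A"
proof
  assume le: "card (A // r) \<le> 1"
  have "finite (A // r)"
    using finite_quotient[OF assms(1) equiv_type[OF assms(2)]] .
  then have "r `` {x} = r `` {y}" if "x \<in> A" "y \<in> A" for x y
    using le card_le_Suc0_iff_eq[OF \<open>finite (A // r)\<close>] quotientI[OF that(1)] quotientI[OF that(2)]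
    by auto
  then show "r = A \<times> A"
    using equiv_type[OF assms(2)] eq_equiv_class[OF _ assms(2)] by blast
next
  assume "r = A \<times> A"
  then have "A // r \<subseteq> {A}"
    by (auto simp: quotient_def)
  from card_mono[OF _ this] show "card (A // r) \<le> 1"
    by simp
qed

lemma finite_out_neighbours_cycle:
  assumes "finite A" "a \<in> A"
    and out: "\<And>u. u \<in> A \<Longrightarrow> \<exists>v\<in>A. v \<noteq> u \<and> (u, v) \<in> R"
  obtains u v where "u \<in> A" "v \<in> A" "u \<noteq> v" "(u, v) \<in> R\<^sup>*" "(v, u) \<in> R\<^sup>*"
proof -
  define S where "S = {(u, v) \<in> R. u \<in> A \<and> v \<in> A \<and> u \<noteq> v}"
  have "\<not> acyclic S"
  proof
    assume "acyclic S"
    moreover have "finite S"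
      using finite_subset[of S "A \<times> A"] assms(1) unfolding S_def by blast
    ultimately have "wf (S\<inverse>)"
      using finite_acyclic_wf_converse by blast
    then obtain z where "z \<in> A" "\<And>y. (y, z) \<in> S\<inverse> \<Longrightarrow> y \<notin> A"
      using wfE_min[OF _ assms(2)] by metis
    then show False
      using out[of z] unfolding S_def by blast
  qed
  then obtain u where "(u, u) \<in> S\<^sup>+"
    unfolding acyclic_def by blast
  then obtain v where uv: "(u, v) \<in> S" "(v, u) \<in> S\<^sup>*"
    using tranclD by metis
  have "S\<^sup>* \<subseteq> R\<^sup>*"
    by (rule rtrancl_mono) (auto simp: S_def)
  show thesis
  proof (rule that)
    show "u \<in> A" "v \<in> A" "u \<noteq> v" "(u, v) \<in> R\<^sup>*"
      using uv(1) by (auto simp: S_def)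
    show "(v, u) \<in> R\<^sup>*"
      using uv(2) \<open>S\<^sup>* \<subseteq> R\<^sup>*\<close> by blast
  qed
qed

lemma word_act_Nil [simp]: "word_act delta q [] = q"
  by (simp add: word_act_def)

lemma word_act_Cons [simp]: "word_act delta q (a # w) = word_act delta (delta q a) w"
  by (simp add: word_act_def)

lemma word_act_append [simp]: "word_act delta q (u @ v) = word_act delta (word_act delta q u) v"
  by (simp add: word_act_def)

lemma word_act_closed:
  assumes "is_dfa Q Sig delta" "q \<in> Q" "set w \<subseteq> Sig"
  shows "word_act delta q w \<in> Q"
  using assms(2,3) by (induction w arbitrary: q) (use assms(1) in \<open>auto simp: is_dfa_def\<close>)

lemma inj_on_comp_endo_iff:
  assumes "finite A" "f ` A \<subseteq> A"
  shows "inj_on (g \<circ> f) A \<longleftrightarrow> inj_on f A \<and> inj_on g A"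
  using assms comp_inj_on_iff endo_inj_surj inj_on_imageI2 by metis

lemma perm_letters_iff_inj_on:
  assumes "is_dfa Q Sig delta" "a \<in> Sig"
  shows "a \<in> perm_letters Q Sig delta \<longleftrightarrow> inj_on (\<lambda>q. delta q a) Q"
proof -
  have "finite Q" "(\<lambda>q. delta q a) ` Q \<subseteq> Q"
    using assms by (auto simp: is_dfa_def)
  then show ?thesis
    using endo_inj_surj[of Q "\<lambda>q. delta q a"] assms(2) by (auto simp: perm_letters_def bij_betw_def)
qed

lemma inj_on_word_act_iff:
  assumes dfa: "is_dfa Q Sig delta" and "set w \<subseteq> Sig"
  shows "inj_on (\<lambda>q. word_act delta q w) Q \<longleftrightarrow> set w \<subseteq> perm_letters Q Sig delta"
  using assms(2)
proof (induction w)
  case (Cons a w)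
  have split: "(\<lambda>q. word_act delta q (a # w)) = (\<lambda>q. word_act delta q w) \<circ> (\<lambda>q. delta q a)"
    by auto
  have "finite Q" "(\<lambda>q. delta q a) ` Q \<subseteq> Q"
    using dfa Cons.prems by (auto simp: is_dfa_def)
  then have "inj_on ((\<lambda>q. word_act delta q w) \<circ> (\<lambda>q. delta q a)) Q
      \<longleftrightarrow> inj_on (\<lambda>q. delta q a) Q \<and> inj_on (\<lambda>q. word_act delta q w) Q"
    by (rule inj_on_comp_endo_iff)
  then show ?case
    unfolding split using Cons perm_letters_iff_inj_on[OF dfa, of a] by auto
qed simp

lemma transposition_word:
  assumes dfa: "is_dfa Q Sig delta" and full: "transition_monoid Q Sig delta = full_transf Q"
    and "u \<in> Q" "v \<in> Q"
  obtains w where "set w \<subseteq> perm_letters Q Sig delta"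
    and "\<And>q. q \<in> Q \<Longrightarrow> word_act delta q w = transpose u v q"
proof -
  have "restrict (transpose u v) Q \<in> full_transf Q"
    using assms(3,4) by (auto simp: full_transf_def transpose_def)
  then obtain w where w: "restrict (transpose u v) Q = restrict (\<lambda>q. word_act delta q w) Q"
      and "set w \<subseteq> Sig"
    unfolding full[symmetric] transition_monoid_def by blast
  then have act: "\<And>q. q \<in> Q \<Longrightarrow> word_act delta q w = transpose u v q"
    by (metis restrict_apply')
  then have "inj_on (\<lambda>q. word_act delta q w) Q"
    using inj_on_cong[of Q "\<lambda>q. word_act delta q w" "transpose u v"] by simp
  then show thesis
    using that act inj_on_word_act_iff[OF dfa \<open>set w \<subseteq> Sig\<close>] by blast
qed

text \<open>Realise the transposition of \<open>a\<close> and \<open>p\<close>, and then the transposition moving the image of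
  \<open>b\<close> to \<open>q\<close>; the latter fixes \<open>p\<close>.\<close>
lemma full_transf_two_transitive:
  assumes dfa: "is_dfa Q Sig delta" and full: "transition_monoid Q Sig delta = full_transf Q"
    and "a \<in> Q" "b \<in> Q" "a \<noteq> b" "p \<in> Q" "q \<in> Q" "p \<noteq> q"
  shows "\<exists>w. set w \<subseteq> perm_letters Q Sig delta \<and> word_act delta a w = p \<and> word_act delta b w = q"
proof -
  obtain w1 where w1: "set w1 \<subseteq> perm_letters Q Sig delta"
      "\<And>r. r \<in> Q \<Longrightarrow> word_act delta r w1 = transpose a p r"
    using transposition_word[OF dfa full \<open>a \<in> Q\<close> \<open>p \<in> Q\<close>] by blast
  define b' where "b' = transpose a p b"
  have "b' \<in> Q" "b' \<noteq> p"
    using assms(3-6) by (auto simp: b'_def transpose_def)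
  obtain w2 where w2: "set w2 \<subseteq> perm_letters Q Sig delta"
      "\<And>r. r \<in> Q \<Longrightarrow> word_act delta r w2 = transpose b' q r"
    using transposition_word[OF dfa full \<open>b' \<in> Q\<close> \<open>q \<in> Q\<close>] by blast
  have "word_act delta a w1 = p" "word_act delta b w1 = b'"
    using w1(2) assms(3,4) by (simp_all add: b'_def)
  then have "word_act delta a (w1 @ w2) = p" "word_act delta b (w1 @ w2) = q"
    using w2(2) assms(6,8) \<open>b' \<in> Q\<close> \<open>b' \<noteq> p\<close> by simp_all
  then show ?thesis
    using w1(1) w2(1) by (intro exI[of _ "w1 @ w2"]) auto
qed

lemma excl_in_diff_image:
  assumes "finite Q" "Q \<noteq> {}" "(\<lambda>q. delta q x) ` Q \<subseteq> Q"
    and "letter_rank Q delta x = card Q - 1"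
  shows "excl Q delta x \<in> Q - (\<lambda>q. delta q x) ` Q"
proof -
  let ?I = "(\<lambda>q. delta q x) ` Q"
  have "card Q > 0"
    using assms(1,2) by (simp add: card_gt_0_iff)
  then have "card (Q - ?I) = 1"
    using card_Diff_subset[OF finite_subset[OF assms(3,1)] assms(3)] assms(4)
    by (simp add: letter_rank_def)
  then obtain p where "Q - ?I = {p}"
    by (rule card_1_singletonE)
  then show ?thesis
    unfolding excl_def by auto
qed

lemma dupl_in_image:
  assumes "finite Q" "Q \<noteq> {}" "letter_rank Q delta x = card Q - 1"
  shows "dupl Q delta x \<in> (\<lambda>q. delta q x) ` Q"
proof -
  let ?f = "\<lambda>q. delta q x"
  have "card Q > 0"
    using assms(1,2) by (simp add: card_gt_0_iff)
  then have "card (?f ` Q) \<noteq> card Q"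
    using assms(3) by (simp add: letter_rank_def)
  then obtain q1 q2 where q: "q1 \<in> Q" "q2 \<in> Q" "q1 \<noteq> q2" "?f q1 = ?f q2"
    using card_image[of ?f Q] unfolding inj_on_def by blast
  have "?f ` Q \<subseteq> ?f ` (Q - {q2})"
  proof
    fix y assume "y \<in> ?f ` Q"
    then obtain z where "z \<in> Q" "y = ?f z"
      by blast
    then have "y = ?f (if z = q2 then q1 else z)" "(if z = q2 then q1 else z) \<in> Q - {q2}"
      using q by auto
    then show "y \<in> ?f ` (Q - {q2})"
      by (rule image_eqI)
  qed
  then have "?f ` (Q - {q2}) = ?f ` Q"
    by blast
  then have "card (?f ` (Q - {q2})) = card (Q - {q2})"
    using assms(1,3) q(2) by (simp add: letter_rank_def)
  then have inj: "inj_on ?f (Q - {q2})"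
    using assms(1) by (intro eq_card_imp_inj_on) simp_all
  have unique: "p = ?f q2"
    if "r1 \<in> Q" "r2 \<in> Q" "r1 \<noteq> r2" "p = ?f r1" "p = ?f r2" for p r1 r2
  proof (rule ccontr)
    assume "p \<noteq> ?f q2"
    then have "r1 \<noteq> q2" "r2 \<noteq> q2"
      using that by auto
    then show False
      using inj_onD[OF inj, of r1 r2] that by auto
  qed
  have "dupl Q delta x = ?f q2"
    unfolding dupl_def
  proof (rule the_equality)
    show "\<exists>r1\<in>Q. \<exists>r2\<in>Q. r1 \<noteq> r2 \<and> ?f q2 = ?f r1 \<and> ?f q2 = ?f r2"
      using q by metis
  qed (use unique in blast)
  then show ?thesis
    using q(2) by simp
qed

locale two_transitive_dfa =
  fixes Q :: "'q set" and Sig :: "'a set" and delta :: "'q \<Rightarrow> 'a \<Rightarrow> 'q"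
  assumes dfa: "is_dfa Q Sig delta"
    and two_transitive: "\<And>a b p q. \<lbrakk>a \<in> Q; b \<in> Q; a \<noteq> b; p \<in> Q; q \<in> Q; p \<noteq> q\<rbrakk> \<Longrightarrow>
      \<exists>w. set w \<subseteq> perm_letters Q Sig delta \<and> word_act delta a w = p \<and> word_act delta b w = q"
begin

abbreviation perms :: "'a set" where
  "perms \<equiv> perm_letters Q Sig delta"

lemma finite_states: "finite Q"
  using dfa by (simp add: is_dfa_def)

lemma perm_word_closed: "q \<in> Q \<Longrightarrow> set w \<subseteq> perms \<Longrightarrow> word_act delta q w \<in> Q"
  using word_act_closed[OF dfa] by (auto simp: perm_letters_def)

lemma perm_letter_closed: "q \<in> Q \<Longrightarrow> c \<in> perms \<Longrightarrow> delta q c \<in> Q"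
  using perm_word_closed[of q "[c]"] by simp

lemma inj_on_perm_word: "set w \<subseteq> perms \<Longrightarrow> inj_on (\<lambda>q. word_act delta q w) Q"
  using inj_on_word_act_iff[OF dfa] by (auto simp: perm_letters_def)

lemma invariant_relation_contains_all_pairs:
  assumes invariant: "\<And>u v c. (u, v) \<in> R \<Longrightarrow> u \<in> Q \<Longrightarrow> v \<in> Q \<Longrightarrow> c \<in> perms \<Longrightarrow>
      (delta u c, delta v c) \<in> R"
    and "a \<in> Q" "b \<in> Q" "a \<noteq> b" "(a, b) \<in> R" "p \<in> Q" "q \<in> Q" "p \<noteq> q"
  shows "(p, q) \<in> R"
proof -
  have word_invariant: "(word_act delta u w, word_act delta v w) \<in> R"
    if "(u, v) \<in> R" "u \<in> Q" "v \<in> Q" "set w \<subseteq> perms" for u v w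
    using that by (induction w arbitrary: u v) (auto intro: invariant perm_letter_closed)
  obtain w where "set w \<subseteq> perms" "word_act delta a w = p" "word_act delta b w = q"
    using two_transitive assms(2-4,6-8) by blast
  then show ?thesis
    using word_invariant assms(2,3,5) by metis
qed

lemma invariant_set_contains_all:
  assumes invariant: "\<And>u c. u \<in> A \<Longrightarrow> u \<in> Q \<Longrightarrow> c \<in> perms \<Longrightarrow> delta u c \<in> A"
    and "a \<in> A" "a \<in> Q" "b \<in> Q" "a \<noteq> b"
  shows "Q \<subseteq> A"
proof
  fix p assume "p \<in> Q"
  let ?R = "{(u, v). u \<in> A}"
  have "(p, if p = a then b else a) \<in> ?R"
    by (rule invariant_relation_contains_all_pairs[of ?R a b])
      (use invariant assms(2-5) \<open>p \<in> Q\<close> in auto)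
  then show "p \<in> A"
    by simp
qed

end

lemma two_transitive_dfa_if_full_transf:
  assumes "is_dfa Q Sig delta" "transition_monoid Q Sig delta = full_transf Q"
  shows "two_transitive_dfa Q Sig delta"
  by (rule two_transitive_dfa.intro[OF assms(1) full_transf_two_transitive[OF assms]])

locale orbit_graph = two_transitive_dfa Q Sig delta
  for Q :: "'q set" and Sig :: "'a set" and delta :: "'q \<Rightarrow> 'a \<Rightarrow> 'q" +
  fixes a b :: 'q
  assumes a_in: "a \<in> Q" and b_in: "b \<in> Q" and a_neq_b: "a \<noteq> b"
begin

definition orbit_edges :: "nat \<Rightarrow> ('q \<times> 'q) set" where
  "orbit_edges i = {(word_act delta a w, word_act delta b w) | w. w \<in> short_words perms i}"

lemma orbit_edges_iff:
  "(u, v) \<in> orbit_edges i \<longleftrightarrow>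
    (\<exists>w. set w \<subseteq> perms \<and> length w \<le> i \<and> u = word_act delta a w \<and> v = word_act delta b w)"
  by (auto simp: orbit_edges_def short_words_def)

lemma orbit_edges_subset: "(u, v) \<in> orbit_edges i \<Longrightarrow> u \<in> Q \<and> v \<in> Q \<and> u \<noteq> v"
  using perm_word_closed a_in b_in a_neq_b inj_on_perm_word
  by (auto simp: orbit_edges_iff dest: inj_onD)

lemma orbit_edges_mono: "i \<le> j \<Longrightarrow> orbit_edges i \<subseteq> orbit_edges j"
  by (auto simp: orbit_edges_def short_words_def)

lemma orbit_edges_Suc:
  assumes "(u, v) \<in> orbit_edges i" "c \<in> perms"
  shows "(delta u c, delta v c) \<in> orbit_edges (Suc i)"
proof -
  obtain w where "set w \<subseteq> perms" "length w \<le> i" "u = word_act delta a w" "v = word_act delta b w"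
    using assms(1) by (auto simp: orbit_edges_iff)
  then show ?thesis
    using assms(2) unfolding orbit_edges_iff by (intro exI[of _ "w @ [c]"]) auto
qed

lemma pair_in_orbit_edges: "(a, b) \<in> orbit_edges i"
  unfolding orbit_edges_iff by (intro exI[of _ "[]"]) simp

lemma Domain_orbit_edges_stable_imp_eq:
  assumes "Domain (orbit_edges (Suc i)) \<subseteq> Domain (orbit_edges i)"
  shows "Domain (orbit_edges i) = Q"
proof
  show "Domain (orbit_edges i) \<subseteq> Q"
    using orbit_edges_subset by fastforce
  have "delta u c \<in> Domain (orbit_edges i)" if u: "u \<in> Domain (orbit_edges i)" and c: "c \<in> perms" for u c
  proof -
    obtain v where "(u, v) \<in> orbit_edges i"
      using u by blast
    then have "(delta u c, delta v c) \<in> orbit_edges (Suc i)"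
      using c by (rule orbit_edges_Suc)
    then show ?thesis
      using assms by blast
  qed
  moreover have "a \<in> Domain (orbit_edges i)"
    using pair_in_orbit_edges by blast
  ultimately show "Q \<subseteq> Domain (orbit_edges i)"
    using invariant_set_contains_all[of "Domain (orbit_edges i)" a b] a_in b_in a_neq_b by blast
qed

lemma Domain_orbit_edges_eq: "Domain (orbit_edges (card Q - 1)) = Q"
proof -
  define missing where "missing i = card (Q - Domain (orbit_edges i))" for i
  have sources: "Domain (orbit_edges i) \<subseteq> Q" for i
    using orbit_edges_subset by force
  have grow: "Domain (orbit_edges i) \<subseteq> Domain (orbit_edges (Suc i))" for i
    using orbit_edges_mono[of i "Suc i"] by auto
  then have "missing (Suc i) \<le> missing i" for i
    unfolding missing_def using finite_states by (intro card_mono) auto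
  moreover have "missing i = 0" if "missing (Suc i) = missing i" for i
  proof -
    have "Q - Domain (orbit_edges (Suc i)) = Q - Domain (orbit_edges i)"
      using that grow[of i] finite_states unfolding missing_def
      by (intro card_subset_eq) auto
    then have "Domain (orbit_edges (Suc i)) \<subseteq> Domain (orbit_edges i)"
      using sources by blast
    then have "Domain (orbit_edges i) = Q"
      by (rule Domain_orbit_edges_stable_imp_eq)
    then show ?thesis
      by (simp add: missing_def)
  qed
  ultimately have "missing (0 + (card Q - 1)) \<le> missing 0 - (card Q - 1)"
    by (rule countdown_to_zero)
  moreover have "missing 0 \<le> card Q - 1"
  proof -
    have "Q - Domain (orbit_edges 0) \<subseteq> Q - {a}"
      using pair_in_orbit_edges by blast
    then show ?thesis
      unfolding missing_def using card_mono[of "Q - {a}"] finite_states a_in by simp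
  qed
  ultimately have "Q - Domain (orbit_edges (card Q - 1)) = {}"
    using finite_states unfolding missing_def by simp
  then show ?thesis
    using sources by blast
qed

lemma out_neighbour_exists: "u \<in> Q \<Longrightarrow> \<exists>v\<in>Q. v \<noteq> u \<and> (u, v) \<in> orbit_edges (card Q - 1)"
  using Domain_orbit_edges_eq orbit_edges_subset by force

definition strong_components :: "nat \<Rightarrow> ('q \<times> 'q) set" where
  "strong_components i =
    {(u, v) \<in> Q \<times> Q. (u, v) \<in> (orbit_edges i)\<^sup>* \<and> (v, u) \<in> (orbit_edges i)\<^sup>*}"

lemma equiv_strong_components: "equiv Q (strong_components i)"
  by (rule equivI) (auto simp: strong_components_def refl_on_def sym_def trans_def)

lemma strong_components_mono: "strong_components i \<subseteq> strong_components (Suc i)"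
  using rtrancl_mono[OF orbit_edges_mono[of i "Suc i"]]
  by (auto simp: strong_components_def)

lemma strong_components_Suc:
  assumes "(u, v) \<in> strong_components i" "c \<in> perms"
  shows "(delta u c, delta v c) \<in> strong_components (Suc i)"
proof -
  have "(delta x c, delta y c) \<in> (orbit_edges (Suc i))\<^sup>*" if "(x, y) \<in> (orbit_edges i)\<^sup>*" for x y
    using that by (induction rule: rtrancl_induct)
      (auto intro: rtrancl_into_rtrancl orbit_edges_Suc assms(2))
  then show ?thesis
    using assms perm_letter_closed by (auto simp: strong_components_def)
qed

lemma strong_components_nontrivial:
  assumes "card Q - 1 \<le> i"
  obtains u v where "u \<noteq> v" "(u, v) \<in> strong_components i"
proof -
  obtain u v where "u \<in> Q" "v \<in> Q" "u \<noteq> v"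
      "(u, v) \<in> (orbit_edges (card Q - 1))\<^sup>*" "(v, u) \<in> (orbit_edges (card Q - 1))\<^sup>*"
    using finite_out_neighbours_cycle[OF finite_states a_in out_neighbour_exists] by blast
  moreover have "(orbit_edges (card Q - 1))\<^sup>* \<subseteq> (orbit_edges i)\<^sup>*"
    using rtrancl_mono[OF orbit_edges_mono[OF assms]] .
  ultimately show thesis
    using that by (auto simp: strong_components_def)
qed

lemma strong_components_stable_imp_all:
  assumes "card Q - 1 \<le> i" "strong_components (Suc i) \<subseteq> strong_components i"
  shows "strong_components i = Q \<times> Q"
proof -
  obtain u v where "u \<noteq> v" "(u, v) \<in> strong_components i"
    using strong_components_nontrivial[OF assms(1)] .
  moreover have "(delta x c, delta y c) \<in> strong_components i"
    if "(x, y) \<in> strong_components i" "c \<in> perms" for x y c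
    using strong_components_Suc[OF that] assms(2) by blast
  ultimately have "(p, q) \<in> strong_components i" if "p \<in> Q" "q \<in> Q" "p \<noteq> q" for p q
    using invariant_relation_contains_all_pairs[of "strong_components i" u v p q] that
      equiv_type[OF equiv_strong_components] by blast
  then show ?thesis
    using equiv_strong_components[of i] by (auto simp: equiv_def refl_on_def)
qed

lemma strong_components_eq: "strong_components (2 * card Q - 3) = Q \<times> Q"
proof -
  let ?n = "card Q"
  define excess where "excess i = card (Q // strong_components i) - 1" for i
  have "?n \<ge> 2"
    using card_mono[OF finite_states, of "{a, b}"] a_in b_in a_neq_b by simp
  have classes_pos: "card (Q // strong_components i) > 0" for i
    using finite_quotient[OF finite_states equiv_type[OF equiv_strong_components]] a_in
    by (auto simp: card_gt_0_iff)
  have "card (Q // strong_components (Suc i)) \<le> card (Q // strong_components i)" for i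
    using finite_refines_card_le strong_components_mono equiv_strong_components
      finite_quotient[OF finite_states equiv_type[OF equiv_strong_components]] by blast
  then have "excess (Suc i) \<le> excess i" for i
    unfolding excess_def using diff_le_mono by blast
  moreover have "excess i = 0" if "?n - 1 \<le> i" "excess (Suc i) = excess i" for i
  proof -
    have "\<not> strong_components i \<subset> strong_components (Suc i)"
    proof
      assume "strong_components i \<subset> strong_components (Suc i)"
      then have "card (Q // strong_components (Suc i)) < card (Q // strong_components i)"
        by (rule card_quotient_strict_refinement[OF finite_states equiv_strong_components
              equiv_strong_components])
      then show False
        using that(2) classes_pos[of "Suc i"] unfolding excess_def by linarith
    qed
    then have "strong_components i = Q \<times> Q"
      using strong_components_stable_imp_all[OF that(1)] strong_components_mono by blast
    then have "card (Q // strong_components i) \<le> 1"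
      using card_quotient_le_one_iff[OF finite_states equiv_strong_components] by blast
    then show ?thesis
      unfolding excess_def by simp
  qed
  ultimately have "excess (?n - 1 + (?n - 2)) \<le> excess (?n - 1) - (?n - 2)"
    by (intro countdown_to_zero)
  moreover have "excess (?n - 1) \<le> ?n - 2"
  proof -
    obtain u v where "u \<noteq> v" "(u, v) \<in> strong_components (?n - 1)"
      using strong_components_nontrivial by blast
    then show ?thesis
      using card_quotient_less_card[OF finite_states equiv_strong_components] unfolding excess_def
      by fastforce
  qed
  moreover have "?n - 1 + (?n - 2) = 2 * ?n - 3"
    using \<open>?n \<ge> 2\<close> by simp
  ultimately show ?thesis
    using card_quotient_le_one_iff[OF finite_states equiv_strong_components] unfolding excess_def
    by simp
qed

lemma strongly_connected_orbit_edges: "strongly_connected Q (orbit_edges (2 * card Q - 3))"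
proof -
  let ?E = "orbit_edges (2 * card Q - 3)"
  have "(p, q) \<in> ?E\<^sup>*" if "p \<in> Q" "q \<in> Q" for p q
  proof -
    have "(p, q) \<in> strong_components (2 * card Q - 3)"
      using that strong_components_eq by blast
    then show ?thesis
      by (simp add: strong_components_def)
  qed
  moreover have "Restr ?E Q = ?E"
    using orbit_edges_subset by auto
  ultimately show ?thesis
    unfolding strongly_connected_def by simp
qed

end

theorem lemma2:
  fixes Q :: "'q set" and Sig :: "'a set" and delta :: "'q \<Rightarrow> 'a \<Rightarrow> 'q"
    and n :: nat and x :: 'a
  assumes "is_dfa Q Sig delta"
    and "card Q = n" and "n \<ge> 2"
    and "transition_monoid Q Sig delta = full_transf Q"
    and "x \<in> Sig" and "letter_rank Q delta x = n - 1"
  shows "strongly_connected Q (Gamma_edges Q Sig delta x (2 * n - 3))"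
proof -
  have Q: "finite Q" "Q \<noteq> {}" and maps_to: "(\<lambda>q. delta q x) ` Q \<subseteq> Q"
    using assms(1,5) by (auto simp: is_dfa_def)
  have rank: "letter_rank Q delta x = card Q - 1"
    using assms(2,6) by simp
  have "excl Q delta x \<in> Q - (\<lambda>q. delta q x) ` Q" "dupl Q delta x \<in> (\<lambda>q. delta q x) ` Q"
    using excl_in_diff_image[OF Q maps_to rank] dupl_in_image[OF Q rank] .
  then interpret orbit_graph Q Sig delta "excl Q delta x" "dupl Q delta x"
    using two_transitive_dfa_if_full_transf[OF assms(1,4)] maps_to
    by (auto intro!: orbit_graph.intro orbit_graph_axioms.intro)
  have "Gamma_edges Q Sig delta x = orbit_edges"
    by (simp add: fun_eq_iff Gamma_edges_def orbit_edges_def)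
  then show ?thesis
    using strongly_connected_orbit_edges assms(2) by simp
qed

end
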